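(* Let $K_1=\overline{1}$ and, for $j\ge1$, let $K_{j+1}$ be the periodic sequence whose repeating block is obtained by writing the repeating block of $K_j$ twice and replacing the last symbol by its complement. For $s=s_1s_2\dots\in\{0,1\}^{\mathbb N}$ let $\tau(s)=\sum_{k\ge1}t_k2^{-k}$ with $t_k=\sum_{i=1}^k s_i\pmod 2$, and put $\tau_j=\tau(K_j)$. Then for every $j\ge1$, $$\tau_{j+1}-\tau_j=\frac{2}{2^{2^j}+1}\,(1-\tau_j).$$ *)

theory Defs
  imports Complex_Main
begin

text \<open>Repeating block of K_j (j \<ge> 1), symbols in {0,1}. Index 0 is unused.\<close>
fun Kblock :: "nat \<Rightarrow> nat list" where
  "Kblock 0 = []"
| "Kblock (Suc 0) = [1]"
| "Kblock (Suc (Suc j)) =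
     (let b = Kblock (Suc j) in b @ butlast b @ [1 - last b])"

text \<open>The periodic sequence K_j = s_1 s_2 ..., indexed from 1 (value at 0 irrelevant).\<close>
definition K :: "nat \<Rightarrow> nat \<Rightarrow> nat" where
  "K j k = Kblock j ! ((k - 1) mod length (Kblock j))"

definition tpar :: "(nat \<Rightarrow> nat) \<Rightarrow> nat \<Rightarrow> nat" where
  "tpar s k = (\<Sum>i=1..k. s i) mod 2"

definition tau :: "(nat \<Rightarrow> nat) \<Rightarrow> real" where
  "tau s = (\<Sum>k. real (tpar s (Suc k)) / 2 ^ Suc k)"

end

theory Submission
  imports Defs
begin

text \<open>
  Let \<open>t\<^sub>j = tpar (K j)\<close>. The block of \<open>K\<^sub>j\<close> has length \<open>2^(j-1)\<close> and odd sum, so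
  \<open>t\<^sub>j(k + 2^(j-1)) = 1 - t\<^sub>j(k)\<close>: thus \<open>t\<^sub>j\<close> has period \<open>2^j\<close>, while \<open>t\<^sub>j\<^sub>+\<^sub>1\<close> is
  antiperiodic with antiperiod \<open>2^j\<close>. The two sequences agree on their first \<open>2^j - 1\<close> digits,
  and digit \<open>2^j\<close> is \<open>0\<close> for \<open>t\<^sub>j\<close> but \<open>1\<close> for \<open>t\<^sub>j\<^sub>+\<^sub>1\<close>. Summing the geometric series, with
  \<open>N = 2^(2^j)\<close> and \<open>P\<close> the binary value of the first \<open>2^j\<close> digits of \<open>t\<^sub>j\<close>, gives
  \<open>(N - 1) \<tau>\<^sub>j = N P\<close> and \<open>(N + 1) \<tau>\<^sub>j\<^sub>+\<^sub>1 = N P + 2\<close>; subtracting yields the claim.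
\<close>

definition binval :: "(nat \<Rightarrow> nat) \<Rightarrow> real" where
  "binval t = (\<Sum>k. real (t (Suc k)) / 2 ^ Suc k)"

definition binprefix :: "(nat \<Rightarrow> nat) \<Rightarrow> nat \<Rightarrow> real" where
  "binprefix t n = (\<Sum>k<n. real (t (Suc k)) / 2 ^ Suc k)"

lemma tau_eq_binval_tpar: "tau s = binval (tpar s)"
  unfolding tau_def binval_def ..

lemma binprefix_Suc:
  "binprefix t (Suc n) = binprefix t n + real (t (Suc n)) / 2 ^ Suc n"
  unfolding binprefix_def by simp

lemma binprefix_change_last_digit:
  assumes "1 \<le> n" and "\<And>k. 1 \<le> k \<Longrightarrow> k < n \<Longrightarrow> t' k = t k"
  shows "binprefix t' n = binprefix t n + (real (t' n) - real (t n)) / 2 ^ n"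
proof -
  obtain m where n: "n = Suc m" using assms(1) by (cases n) auto
  have "binprefix t' m = binprefix t m"
    unfolding binprefix_def using assms(2) n by (intro sum.cong) auto
  then show ?thesis
    unfolding n binprefix_Suc by (simp add: diff_divide_distrib)
qed

lemma summable_binary_digits:
  assumes "\<And>k. t k \<le> 1"
  shows "summable (\<lambda>k. real (t (Suc k)) / 2 ^ Suc k)"
proof (rule summable_comparison_test)
  show "summable (\<lambda>k. (1 / 2 :: real) ^ Suc k)"
    using power_half_series by (rule sums_summable)
  show "\<exists>N. \<forall>k\<ge>N. norm (real (t (Suc k)) / 2 ^ Suc k) \<le> (1 / 2) ^ Suc k"
    using assms by (auto simp: power_divide divide_right_mono)
qed

lemma binval_split:
  assumes "\<And>k. t k \<le> 1"
  shows "binval t = binprefix t p + binval (\<lambda>k. t (k + p)) / 2 ^ p"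
proof -
  define f where "f k = real (t (Suc k)) / 2 ^ Suc k" for k
  have "summable f"
    unfolding f_def using assms by (rule summable_binary_digits)
  then have "binval t = (\<Sum>n. f (n + p)) + binprefix t p"
    unfolding binval_def binprefix_def f_def[symmetric] by (rule suminf_split_initial_segment)
  moreover have "(\<Sum>n. f (n + p)) = binval (\<lambda>k. t (k + p)) / 2 ^ p"
  proof -
    have "f (n + p) = real (t (Suc n + p)) / 2 ^ Suc n / 2 ^ p" for n
      unfolding f_def by (simp add: power_add)
    then have "(\<Sum>n. f (n + p)) = (\<Sum>n. real (t (Suc n + p)) / 2 ^ Suc n / 2 ^ p)"
      by simp
    also have "\<dots> = (\<Sum>n. real (t (Suc n + p)) / 2 ^ Suc n) / 2 ^ p"
      by (rule suminf_divide, rule summable_binary_digits[of "\<lambda>k. t (k + p)"]) (use assms in simp)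
    finally show ?thesis
      unfolding binval_def .
  qed
  ultimately show ?thesis by simp
qed

lemma binval_complement:
  assumes "\<And>k. t k \<le> 1"
  shows "binval (\<lambda>k. 1 - t k) = 1 - binval t"
proof -
  have digit: "real (1 - t (Suc k)) / 2 ^ Suc k = (1 / 2) ^ Suc k - real (t (Suc k)) / 2 ^ Suc k"
    for k using assms[of "Suc k"] by (simp add: power_divide diff_divide_distrib)
  have "(\<lambda>k. real (1 - t (Suc k)) / 2 ^ Suc k) sums (1 - binval t)"
    unfolding digit binval_def
    by (intro sums_diff power_half_series summable_sums summable_binary_digits assms)
  then show ?thesis
    unfolding binval_def by (simp add: sums_iff)
qed

lemma binval_periodic:
  assumes "\<And>k. t k \<le> 1" and "\<And>k. t (k + p) = t k"
  shows "binval t * (2 ^ p - 1) = 2 ^ p * binprefix t p"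
proof -
  have shift: "(\<lambda>k. t (k + p)) = t"
    using assms(2) by auto
  have "binval t = binprefix t p + binval t / 2 ^ p"
    using binval_split[of t p, OF assms(1)] unfolding shift .
  then have "binval t - binval t / 2 ^ p = binprefix t p"
    by linarith
  moreover have "binval t * (2 ^ p - 1) = 2 ^ p * (binval t - binval t / 2 ^ p)"
    by (simp add: field_simps)
  ultimately show ?thesis by simp
qed

lemma binval_antiperiodic:
  assumes "\<And>k. t k \<le> 1" and "\<And>k. t (k + p) = 1 - t k"
  shows "binval t * (2 ^ p + 1) = 2 ^ p * binprefix t p + 1"
proof -
  have shift: "(\<lambda>k. t (k + p)) = (\<lambda>k. 1 - t k)"
    using assms(2) by auto
  have "binval t = binprefix t p + (1 - binval t) / 2 ^ p"
    using binval_split[of t p, OF assms(1)] unfolding shift binval_complement[of t, OF assms(1)] .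
  then have "binval t - (1 - binval t) / 2 ^ p = binprefix t p"
    by linarith
  moreover have "binval t * (2 ^ p + 1) = 2 ^ p * (binval t - (1 - binval t) / 2 ^ p) + 1"
    by (simp add: field_simps)
  ultimately show ?thesis by simp
qed

lemma tpar_le_1: "tpar s k \<le> 1"
  unfolding tpar_def by simp

lemma sum_add_period:
  fixes s :: "nat \<Rightarrow> nat"
  assumes "\<And>i. 1 \<le> i \<Longrightarrow> s (i + L) = s i"
  shows "(\<Sum>i=1..k + L. s i) = (\<Sum>i=1..L. s i) + (\<Sum>i=1..k. s i)"
proof (induction k)
  case (Suc k)
  have "(\<Sum>i=1..Suc k + L. s i) = (\<Sum>i=1..k + L. s i) + s (Suc k + L)"
    by simp
  with Suc assms[of "Suc k"] show ?case by simp
qed simp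

lemma tpar_antiperiodic:
  assumes "\<And>i. 1 \<le> i \<Longrightarrow> s (i + L) = s i" and "odd (\<Sum>i=1..L. s i)"
  shows "tpar s (k + L) = 1 - tpar s k"
proof -
  have "(\<Sum>i=1..k + L. s i) = (\<Sum>i=1..L. s i) + (\<Sum>i=1..k. s i)"
    using assms(1) by (rule sum_add_period)
  moreover have "odd c \<Longrightarrow> (c + b) mod 2 = 1 - b mod 2" for b c :: nat
    by presburger
  ultimately show ?thesis
    unfolding tpar_def using assms(2) by simp
qed

lemma Kblock_Suc:
  "1 \<le> j \<Longrightarrow> Kblock (Suc j) = Kblock j @ butlast (Kblock j) @ [1 - last (Kblock j)]"
  by (cases j) (auto simp: Let_def)

lemma length_Kblock: "1 \<le> j \<Longrightarrow> length (Kblock j) = 2 ^ (j - 1)"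
proof (induction j rule: nat_induct_at_least)
  case (Suc j)
  have "(2::nat) ^ j = 2 ^ (j - 1) + 2 ^ (j - 1)"
    using Suc.hyps by (cases j) auto
  with Suc show ?case
    by (simp add: Kblock_Suc[OF Suc.hyps])
qed simp

lemma Kblock_binary: "x \<in> set (Kblock j) \<Longrightarrow> x \<le> 1"
  by (induction j rule: Kblock.induct) (auto simp: Let_def dest: in_set_butlastD)

lemma odd_sum_list_Kblock: "1 \<le> j \<Longrightarrow> odd (sum_list (Kblock j))"
proof (induction j rule: nat_induct_at_least)
  case (Suc j)
  let ?b = "Kblock j"
  have "?b \<noteq> []" using length_Kblock[OF Suc.hyps] by auto
  then have split_last: "sum_list ?b = sum_list (butlast ?b) + last ?b"
    by (metis append_butlast_last_id sum_list_append sum_list.Cons sum_list.Nil add_0_right)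
  have "last ?b \<le> 1" using \<open>?b \<noteq> []\<close> by (metis Kblock_binary last_in_set)
  have "sum_list (Kblock (Suc j)) = sum_list ?b + sum_list (butlast ?b) + (1 - last ?b)"
    by (simp add: Kblock_Suc[OF Suc.hyps])
  also have "\<dots> = 2 * sum_list (butlast ?b) + 1"
    using split_last \<open>last ?b \<le> 1\<close> by simp
  finally show ?case by simp
qed simp

lemma K_periodic:
  assumes "1 \<le> i"
  shows "K j (i + length (Kblock j)) = K j i"
proof -
  have "i + length (Kblock j) - 1 = (i - 1) + length (Kblock j)" using assms by simp
  then show ?thesis unfolding K_def by simp
qed

lemma sum_K_period: "(\<Sum>i=1..length (Kblock j). K j i) = sum_list (Kblock j)"
proof -
  have "(\<Sum>i=1..length (Kblock j). K j i) = (\<Sum>k<length (Kblock j). K j (Suc k))"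
    by (simp add: sum.atLeast1_atMost_eq)
  also have "\<dots> = (\<Sum>k<length (Kblock j). Kblock j ! k)"
    unfolding K_def by (intro sum.cong) auto
  also have "\<dots> = sum_list (Kblock j)"
    by (simp add: sum_list_sum_nth atLeast0LessThan)
  finally show ?thesis .
qed

lemma tpar_K_antiperiodic:
  assumes "1 \<le> j"
  shows "tpar (K j) (k + 2 ^ (j - 1)) = 1 - tpar (K j) k"
proof -
  have "odd (\<Sum>i=1..length (Kblock j). K j i)"
    unfolding sum_K_period using odd_sum_list_Kblock[OF assms] .
  then have "tpar (K j) (k + length (Kblock j)) = 1 - tpar (K j) k"
    using tpar_antiperiodic[of "K j" "length (Kblock j)" k] K_periodic by blast
  then show ?thesis using length_Kblock[OF assms] by simp
qed

lemma tpar_K_periodic: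
  assumes "1 \<le> j"
  shows "tpar (K j) (k + 2 ^ j) = tpar (K j) k"
proof -
  have "(2::nat) ^ j = 2 ^ (j - 1) + 2 ^ (j - 1)"
    using assms by (cases j) auto
  then show ?thesis
    using tpar_K_antiperiodic[OF assms, of k] tpar_K_antiperiodic[OF assms, of "k + 2 ^ (j - 1)"]
      tpar_le_1[of "K j" k]
    by (simp add: add.assoc)
qed

lemma K_Suc_agree:
  assumes "1 \<le> j" and "1 \<le> i" and "i < 2 ^ j"
  shows "K (Suc j) i = K j i"
proof -
  let ?b = "Kblock j"
  let ?L = "length ?b"
  have "?L = 2 ^ (j - 1)" using length_Kblock[OF assms(1)] .
  then have "?b \<noteq> []" and "2 ^ j = 2 * ?L"
    using assms(1) by (auto simp flip: power_Suc)
  have "K (Suc j) i = (?b @ butlast ?b) ! (i - 1)"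
    unfolding K_def Kblock_Suc[OF assms(1)] using assms \<open>?b \<noteq> []\<close> \<open>2 ^ j = 2 * ?L\<close>
    by (simp add: nth_append)
  also have "\<dots> = ?b ! ((i - 1) mod ?L)"
    using assms \<open>2 ^ j = 2 * ?L\<close>
    by (cases "i - 1 < ?L") (simp_all add: nth_append nth_butlast le_mod_geq)
  also have "\<dots> = K j i"
    unfolding K_def ..
  finally show ?thesis .
qed

lemma tpar_K_Suc_agree:
  assumes "1 \<le> j" and "k < 2 ^ j"
  shows "tpar (K (Suc j)) k = tpar (K j) k"
proof -
  have "(\<Sum>i=1..k. K (Suc j) i) = (\<Sum>i=1..k. K j i)"
    using assms by (intro sum.cong) (simp_all add: K_Suc_agree)
  then show ?thesis
    unfolding tpar_def by simp
qed

lemma binprefix_tpar_K_Suc: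
  assumes "1 \<le> j"
  shows "binprefix (tpar (K (Suc j))) (2 ^ j) = binprefix (tpar (K j)) (2 ^ j) + 1 / 2 ^ 2 ^ j"
proof -
  have "tpar (K (Suc j)) (2 ^ j) = 1"
    using tpar_K_antiperiodic[of "Suc j" 0] by (simp add: tpar_def)
  moreover have "tpar (K j) (2 ^ j) = 0"
    using tpar_K_periodic[OF assms, of 0] by (simp add: tpar_def)
  ultimately show ?thesis
    using tpar_K_Suc_agree[OF assms] by (subst binprefix_change_last_digit) auto
qed

theorem mainTheorem6:
  fixes j :: nat
  assumes "j \<ge> 1"
  shows "tau (K (j + 1)) - tau (K j) = 2 / (2 ^ (2 ^ j) + 1) * (1 - tau (K j))"
proof -
  define N :: real where "N = 2 ^ 2 ^ j"
  define P where "P = binprefix (tpar (K j)) (2 ^ j)"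
  have "tpar (K (Suc j)) (k + 2 ^ j) = 1 - tpar (K (Suc j)) k" for k
    using tpar_K_antiperiodic[of "Suc j" k] by simp
  then have "tau (K (j + 1)) * (N + 1) = N * P + 2"
    using binval_antiperiodic[OF tpar_le_1] binprefix_tpar_K_Suc[OF assms]
    unfolding tau_eq_binval_tpar N_def P_def by (simp add: distrib_left)
  moreover have "tau (K j) * (N - 1) = N * P"
    using binval_periodic[of "tpar (K j)", OF tpar_le_1 tpar_K_periodic[OF assms]]
    unfolding tau_eq_binval_tpar N_def P_def .
  ultimately have "(tau (K (j + 1)) - tau (K j)) * (N + 1) = 2 * (1 - tau (K j))"
    by (simp add: algebra_simps)
  moreover have "N + 1 > 0"
    unfolding N_def by (simp add: add_pos_pos)
  ultimately have "tau (K (j + 1)) - tau (K j) = 2 * (1 - tau (K j)) / (N + 1)"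
    by (simp add: eq_divide_eq)
  then show ?thesis
    unfolding N_def by simp
qed

end
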